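(* Let $X$ be a digraph and $S\subset V(X)$ such that no arc with exactly one end in $S$ lies in a digon. Then $X$ and the local reversal of $X$ at $S$ have the same $H$-spectrum.
   Context: A digraph $X$ has a finite vertex set and an arc set of ordered pairs of distinct vertices; $\{x,y\}$ is a digon if both $xy,yx$ are arcs. $H(X)$ has $(u,v)$-entry $1$ if $uv$ and $vu$ are arcs, $i$ if only $uv$ is an arc, $-i$ if only $vu$ is an arc, and $0$ otherwise; two digraphs have the same $H$-spectrum if their Hermitian adjacency matrices have the same characteristic polynomial. The local reversal of $X$ at $S$ is the digraph obtained by replacing every arc $xy$ with exactly one end in $S$ by its converse $yx$ (arcs with both or no ends in $S$ are unchanged). *)

theory Defs
  imports "Jordan_Normal_Form.Char_Poly"
begin

text \<open>A digraph with vertex set {0..<n} (every finite digraph is isomorphic to one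
  of these) and arc set A: ordered pairs of distinct vertices.\<close>

definition digraph :: "nat \<Rightarrow> (nat \<times> nat) set \<Rightarrow> bool" where
  "digraph n A \<longleftrightarrow> A \<subseteq> {0..<n} \<times> {0..<n} \<and> (\<forall>x. (x, x) \<notin> A)"

definition herm_adj :: "nat \<Rightarrow> (nat \<times> nat) set \<Rightarrow> complex mat" where
  "herm_adj n A = mat n n (\<lambda>(u, v).
     if (u, v) \<in> A \<and> (v, u) \<in> A then 1
     else if (u, v) \<in> A then \<i>
     else if (v, u) \<in> A then - \<i>
     else 0)"

definition local_reversal :: "(nat \<times> nat) set \<Rightarrow> nat set \<Rightarrow> (nat \<times> nat) set" where
  "local_reversal A S =
     {(x, y). (x, y) \<in> A \<and> (x \<in> S \<longleftrightarrow> y \<in> S)} \<union>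
     {(y, x) | x y. (x, y) \<in> A \<and> \<not> (x \<in> S \<longleftrightarrow> y \<in> S)}"

end

theory Submission
  imports Defs
begin

text \<open>Let D be the diagonal matrix with entry -1 at the vertices of S and 1 elsewhere.
  Conjugating H(X) by D negates exactly the entries indexed by arcs with one end in S.
  Such an entry is \<i> or -\<i> (it is not 1 because the arc lies in no digon), and negating it
  is the same as reversing the arc. So H of the local reversal is D H(X) D with D = D\<inverse>,
  and similar matrices have the same characteristic polynomial.\<close>

lemma char_poly_diagonal_similarity:
  fixes B :: "'a :: comm_ring_1 mat"
  assumes B: "B \<in> carrier_mat n n" and inv: "\<And>i. i < n \<Longrightarrow> d i * e i = 1"
  shows "char_poly (mat n n (\<lambda>(i, j). d i * B $$ (i, j) * e j)) = char_poly B"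
proof (rule char_poly_similar, rule similar_matI)
  have "mat_diag n (\<lambda>i. d i * e i) = 1\<^sub>m n"
    by (rule eq_matI) (auto simp: mat_diag_def inv)
  then show "mat_diag n d * mat_diag n e = 1\<^sub>m n" "mat_diag n e * mat_diag n d = 1\<^sub>m n"
    by (simp_all add: mult.commute)
  show "mat n n (\<lambda>(i, j). d i * B $$ (i, j) * e j) = mat_diag n d * B * mat_diag n e"
    using B by (auto simp: mat_diag_mult_left mat_diag_mult_right[of _ n n] intro!: eq_matI)
qed (use B in auto)

lemma local_reversal_iff:
  "(x, y) \<in> local_reversal A S \<longleftrightarrow>
     (if x \<in> S \<longleftrightarrow> y \<in> S then (x, y) \<in> A else (y, x) \<in> A)"
  unfolding local_reversal_def by auto

lemma herm_adj_local_reversal: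
  fixes S :: "nat set" and \<sigma> :: "nat \<Rightarrow> complex"
  defines "\<sigma> i \<equiv> if i \<in> S then -1 else 1"
  assumes no_digon: "\<forall>x y. (x, y) \<in> A \<and> \<not> (x \<in> S \<longleftrightarrow> y \<in> S) \<longrightarrow> (y, x) \<notin> A"
  shows "herm_adj n (local_reversal A S) =
           mat n n (\<lambda>(i, j). \<sigma> i * herm_adj n A $$ (i, j) * \<sigma> j)"
proof (rule eq_matI)
  fix i j assume "i < dim_row (mat n n (\<lambda>(i, j). \<sigma> i * herm_adj n A $$ (i, j) * \<sigma> j))"
    and "j < dim_col (mat n n (\<lambda>(i, j). \<sigma> i * herm_adj n A $$ (i, j) * \<sigma> j))"
  then have ij: "i < n" "j < n" by auto
  have "\<sigma> i * h * \<sigma> j = (\<sigma> i * \<sigma> j) * h" for h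
    by (simp add: ac_simps)
  moreover have "herm_adj n (local_reversal A S) $$ (i, j) = (\<sigma> i * \<sigma> j) * herm_adj n A $$ (i, j)"
  proof (cases "i \<in> S \<longleftrightarrow> j \<in> S")
    case True
    then have "\<sigma> i * \<sigma> j = 1" by (auto simp: \<sigma>_def)
    with True ij show ?thesis
      by (simp add: herm_adj_def local_reversal_iff)
  next
    case False
    then have "\<sigma> i * \<sigma> j = -1" and "\<not> ((i, j) \<in> A \<and> (j, i) \<in> A)"
      using no_digon by (auto simp: \<sigma>_def)
    with False ij show ?thesis
      by (simp add: herm_adj_def local_reversal_iff)
  qed
  ultimately show "herm_adj n (local_reversal A S) $$ (i, j) = mat n n (\<lambda>(i, j). \<sigma> i * herm_adj n A $$ (i, j) * \<sigma> j) $$ (i, j)"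
    using ij by simp
qed (auto simp: herm_adj_def)

theorem proposition8p2:
  fixes n :: nat and A :: "(nat \<times> nat) set" and S :: "nat set"
  assumes "digraph n A"
    and "S \<subseteq> {0..<n}"
    and "\<forall>x y. (x, y) \<in> A \<and> \<not> (x \<in> S \<longleftrightarrow> y \<in> S) \<longrightarrow> (y, x) \<notin> A"
  shows "char_poly (herm_adj n (local_reversal A S)) = char_poly (herm_adj n A)"
proof -
  let ?\<sigma> = "\<lambda>i. if i \<in> S then -1 else 1 :: complex"
  have "herm_adj n A \<in> carrier_mat n n"
    by (simp add: herm_adj_def)
  moreover have "?\<sigma> i * ?\<sigma> i = 1" for i
    by simp
  ultimately show ?thesis
    by (simp only: herm_adj_local_reversal[OF assms(3)] char_poly_diagonal_similarity)
qed

end
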